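(* Let $G$ be a finite simple connected graph other than $K_2$, let $L$ be a subset of its leaves and let $L^c$ be the set of remaining leaves of $G$. Then \[ \rho\circ\lambda(G)=\rho\circ\lambda_L\circ\rho\circ\lambda_{L^c}(G). \]
   Context: A leaf is a vertex of degree one; two distinct vertices are siblings if they have the same closed neighborhood $N[v]=\{v\}\cup N(v)$. For a graph $G$ other than $K_2$ and a set $S$ of leaves of $G$, $\lambda_S(G)$ is the graph obtained by removing the vertices in $S$; $\lambda(G)$ is the graph obtained by removing all leaves of $G$. $\rho(G)$ is obtained from $G$ by contracting each maximal group of siblings to a single vertex. Equalities of graphs are understood up to the natural identification of vertices (i.e. as isomorphic graphs). *)

theory Defs
  imports Main
begin

type_synonym 'a graph = "'a set \<times> ('a \<times> 'a) set"

definition verts :: "'a graph \<Rightarrow> 'a set" where "verts G = fst G"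
definition edges :: "'a graph \<Rightarrow> ('a \<times> 'a) set" where "edges G = snd G"

definition simple_graph :: "'a graph \<Rightarrow> bool" where
  "simple_graph G \<longleftrightarrow> finite (verts G) \<and> edges G \<subseteq> verts G \<times> verts G
     \<and> sym (edges G) \<and> irrefl (edges G)"

definition connected_graph :: "'a graph \<Rightarrow> bool" where
  "connected_graph G \<longleftrightarrow> verts G \<noteq> {} \<and>
     (\<forall>u\<in>verts G. \<forall>v\<in>verts G. (u, v) \<in> (edges G)\<^sup>*)"

definition nbhd :: "'a graph \<Rightarrow> 'a \<Rightarrow> 'a set" where
  "nbhd G v = {u \<in> verts G. (v, u) \<in> edges G}"

definition closed_nbhd :: "'a graph \<Rightarrow> 'a \<Rightarrow> 'a set" where
  "closed_nbhd G v = insert v (nbhd G v)"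

definition degree :: "'a graph \<Rightarrow> 'a \<Rightarrow> nat" where
  "degree G v = card (nbhd G v)"

definition leaves :: "'a graph \<Rightarrow> 'a set" where
  "leaves G = {v \<in> verts G. degree G v = 1}"

definition siblings :: "'a graph \<Rightarrow> 'a \<Rightarrow> 'a \<Rightarrow> bool" where
  "siblings G u v \<longleftrightarrow> u \<in> verts G \<and> v \<in> verts G \<and> u \<noteq> v
     \<and> closed_nbhd G u = closed_nbhd G v"

definition graph_iso :: "'a graph \<Rightarrow> 'b graph \<Rightarrow> bool" where
  "graph_iso G H \<longleftrightarrow> (\<exists>f. bij_betw f (verts G) (verts H) \<and>
     (\<forall>u\<in>verts G. \<forall>v\<in>verts G. (u, v) \<in> edges G \<longleftrightarrow> (f u, f v) \<in> edges H))"

definition is_K2 :: "'a graph \<Rightarrow> bool" where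
  "is_K2 G \<longleftrightarrow> card (verts G) = 2 \<and> finite (verts G) \<and> edges G \<noteq> {}"

definition delete_verts :: "'a set \<Rightarrow> 'a graph \<Rightarrow> 'a graph" where
  "delete_verts S G = (verts G - S, edges G \<inter> ((verts G - S) \<times> (verts G - S)))"

text \<open>lambda_S: remove the leaves in S (S is meant to be a set of leaves; only
  those elements of S that are leaves are removed).\<close>
definition lambda_set :: "'a set \<Rightarrow> 'a graph \<Rightarrow> 'a graph" where
  "lambda_set S G = delete_verts (S \<inter> leaves G) G"

definition lambda :: "'a graph \<Rightarrow> 'a graph" where
  "lambda G = delete_verts (leaves G) G"

definition sib_class :: "'a graph \<Rightarrow> 'a \<Rightarrow> 'a set" where
  "sib_class G v = {u \<in> verts G. closed_nbhd G u = closed_nbhd G v}"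

definition rho :: "'a graph \<Rightarrow> 'a set graph" where
  "rho G = (sib_class G ` verts G,
            {(sib_class G u, sib_class G v) | u v. (u, v) \<in> edges G
                \<and> sib_class G u \<noteq> sib_class G v})"

end

(* Let H be G with the leaves outside L removed. Each l in L is a pendant vertex of H whose
   neighbour w is not a leaf of G (as G is connected and not K2), and lambda(G) is H minus L.
   The sibling-class map p of H sends the vertices of lambda(G) exactly onto the vertices of
   lambda_{p(L)}(rho H): the class of l is not a leaf of rho H precisely when l and w are
   siblings, and then p l = p w. Moreover p preserves adjacency between distinct classes and
   identifies only vertices that remain siblings in lambda(G). A map with these properties
   induces an isomorphism of the sibling reductions, since a closed neighbourhood, being a
   union of sibling classes, is determined by its image under p. *)
theory Submission
  imports Defs
begin

definition undirected :: "'a graph \<Rightarrow> bool" where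
  "undirected G \<longleftrightarrow> edges G \<subseteq> verts G \<times> verts G \<and> sym (edges G)"

lemma verts_pair [simp]: "verts (V, E) = V"
  by (simp add: verts_def)

lemma edges_pair [simp]: "edges (V, E) = E"
  by (simp add: edges_def)

lemma simple_graph_imp_undirected: "simple_graph G \<Longrightarrow> undirected G"
  by (simp add: simple_graph_def undirected_def)

lemma undirected_edgeD:
  assumes "undirected G" "(u, v) \<in> edges G"
  shows "u \<in> verts G" "v \<in> verts G" "(v, u) \<in> edges G"
  using assms by (auto simp: undirected_def dest: symD)

lemma closed_nbhd_iff:
  "v \<in> closed_nbhd G u \<longleftrightarrow> v = u \<or> v \<in> verts G \<and> (u, v) \<in> edges G"
  by (auto simp: closed_nbhd_def nbhd_def)

lemma closed_nbhd_commute: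
  assumes "undirected G" "u \<in> verts G" "v \<in> closed_nbhd G u"
  shows "u \<in> closed_nbhd G v"
  using assms by (auto simp: closed_nbhd_iff undirected_def dest: symD)

lemma closed_nbhd_subset_verts: "u \<in> verts G \<Longrightarrow> closed_nbhd G u \<subseteq> verts G"
  by (auto simp: closed_nbhd_iff)

lemma verts_delete_verts [simp]: "verts (delete_verts S G) = verts G - S"
  by (simp add: delete_verts_def)

lemma edges_delete_verts [simp]:
  "edges (delete_verts S G) = edges G \<inter> (verts G - S) \<times> (verts G - S)"
  by (simp add: delete_verts_def)

lemma undirected_delete_verts: "undirected G \<Longrightarrow> undirected (delete_verts S G)"
  by (auto simp: undirected_def sym_def)

lemma delete_verts_delete_verts:
  "delete_verts A (delete_verts B G) = delete_verts (A \<union> B) G"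
  by (auto simp: delete_verts_def)

lemma nbhd_delete_verts:
  "v \<in> verts G - S \<Longrightarrow> nbhd (delete_verts S G) v = nbhd G v - S"
  by (auto simp: nbhd_def)

lemma closed_nbhd_delete_verts:
  "v \<in> verts G - S \<Longrightarrow> closed_nbhd (delete_verts S G) v = closed_nbhd G v - S"
  by (auto simp: closed_nbhd_def nbhd_delete_verts)

subsection \<open>Sibling classes and the reduction \<open>rho\<close>\<close>

lemma sib_class_self: "u \<in> verts G \<Longrightarrow> u \<in> sib_class G u"
  by (simp add: sib_class_def)

lemma sib_class_eq_iff:
  assumes "u \<in> verts G" "v \<in> verts G"
  shows "sib_class G u = sib_class G v \<longleftrightarrow> closed_nbhd G u = closed_nbhd G v"
  using assms by (auto simp: sib_class_def)

text \<open>Adjacency (or equality) of two vertices depends only on their sibling classes.\<close>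
lemma closed_nbhd_mem_cong:
  assumes G: "undirected G" and u: "u \<in> verts G" and v: "v \<in> verts G"
    and xu: "closed_nbhd G x = closed_nbhd G u" and yv: "closed_nbhd G y = closed_nbhd G v"
    and "y \<in> closed_nbhd G x"
  shows "v \<in> closed_nbhd G u"
proof -
  have "y \<in> closed_nbhd G u"
    using xu \<open>y \<in> closed_nbhd G x\<close> by simp
  then have "u \<in> closed_nbhd G y"
    by (rule closed_nbhd_commute[OF G u])
  then have "u \<in> closed_nbhd G v"
    using yv by simp
  then show ?thesis
    by (rule closed_nbhd_commute[OF G v])
qed

lemma verts_rho: "verts (rho G) = sib_class G ` verts G"
  by (simp add: rho_def)

lemma edge_rho_iff:
  assumes G: "undirected G" and u: "u \<in> verts G" and v: "v \<in> verts G"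
  shows "(sib_class G u, sib_class G v) \<in> edges (rho G) \<longleftrightarrow>
           (u, v) \<in> edges G \<and> sib_class G u \<noteq> sib_class G v"
proof
  assume "(sib_class G u, sib_class G v) \<in> edges (rho G)"
  then obtain x y where xy: "(x, y) \<in> edges G" "sib_class G x = sib_class G u"
      "sib_class G y = sib_class G v" "sib_class G u \<noteq> sib_class G v"
    unfolding rho_def edges_pair by blast
  have x: "x \<in> verts G" and y: "y \<in> verts G"
    using undirected_edgeD[OF G xy(1)] by auto
  have "closed_nbhd G x = closed_nbhd G u" "closed_nbhd G y = closed_nbhd G v"
    using xy(2,3) sib_class_eq_iff[OF x u] sib_class_eq_iff[OF y v] by simp_all
  moreover have "y \<in> closed_nbhd G x"
    using xy(1) y by (simp add: closed_nbhd_iff)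
  ultimately have "v \<in> closed_nbhd G u"
    using closed_nbhd_mem_cong[OF G u v] by blast
  moreover have "u \<noteq> v"
    using xy(4) by blast
  ultimately show "(u, v) \<in> edges G \<and> sib_class G u \<noteq> sib_class G v"
    using xy(4) by (auto simp: closed_nbhd_iff)
qed (unfold rho_def edges_pair, blast)

lemma undirected_rho:
  assumes "undirected G"
  shows "undirected (rho G)"
proof -
  have "edges (rho G) \<subseteq> verts (rho G) \<times> verts (rho G)"
    using undirected_edgeD[OF assms] unfolding rho_def by fastforce
  moreover have "sym (edges (rho G))"
    using undirected_edgeD[OF assms] unfolding rho_def sym_def edges_pair by blast
  ultimately show ?thesis
    by (simp add: undirected_def)
qed

lemma nbhd_rho:
  assumes "undirected G" "u \<in> verts G"
  shows "nbhd (rho G) (sib_class G u) =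
           sib_class G ` {v \<in> nbhd G u. sib_class G v \<noteq> sib_class G u}"
proof -
  have "D \<in> nbhd (rho G) (sib_class G u) \<longleftrightarrow>
          (\<exists>v \<in> verts G. D = sib_class G v \<and> (sib_class G u, sib_class G v) \<in> edges (rho G))"
    for D by (auto simp: nbhd_def verts_rho)
  then show ?thesis
    using edge_rho_iff[OF assms] by (auto simp: nbhd_def)
qed

subsection \<open>Maps that induce isomorphisms of the reductions\<close>

lemma graph_iso_rhoI:
  assumes Q: "undirected Q" and Q': "undirected Q'"
    and onto: "p ` verts Q = verts Q'"
    and sib: "\<And>u v. u \<in> verts Q \<Longrightarrow> v \<in> verts Q \<Longrightarrow>
        sib_class Q' (p u) = sib_class Q' (p v) \<longleftrightarrow> sib_class Q u = sib_class Q v"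
    and edge: "\<And>u v. u \<in> verts Q \<Longrightarrow> v \<in> verts Q \<Longrightarrow> sib_class Q u \<noteq> sib_class Q v \<Longrightarrow>
        (p u, p v) \<in> edges Q' \<longleftrightarrow> (u, v) \<in> edges Q"
  shows "graph_iso (rho Q) (rho Q')"
proof -
  define f where "f C = sib_class Q' (p (SOME x. x \<in> C))" for C
  have f_sib_class: "f (sib_class Q u) = sib_class Q' (p u)" if u: "u \<in> verts Q" for u
  proof -
    define x where "x = (SOME x. x \<in> sib_class Q u)"
    have "x \<in> sib_class Q u"
      unfolding x_def using sib_class_self[OF u] by (rule someI)
    then have x: "x \<in> verts Q" and "closed_nbhd Q x = closed_nbhd Q u"
      by (simp_all add: sib_class_def)
    then have "sib_class Q x = sib_class Q u"
      using sib_class_eq_iff[OF x u] by simp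
    then have "sib_class Q' (p x) = sib_class Q' (p u)"
      using sib[OF x u] by blast
    then show ?thesis
      by (simp add: f_def flip: x_def)
  qed
  have "inj_on f (verts (rho Q))"
  proof (rule inj_onI)
    fix A B assume "A \<in> verts (rho Q)" "B \<in> verts (rho Q)" "f A = f B"
    then obtain u v where "u \<in> verts Q" "v \<in> verts Q" "A = sib_class Q u" "B = sib_class Q v"
      by (auto simp: verts_rho)
    with \<open>f A = f B\<close> show "A = B"
      using sib f_sib_class by simp
  qed
  moreover have "f ` verts (rho Q) = verts (rho Q')"
  proof -
    have "f ` verts (rho Q) = sib_class Q' ` p ` verts Q"
      by (auto simp: verts_rho image_image f_sib_class)
    then show ?thesis
      by (simp add: onto verts_rho)
  qed
  moreover have "(A, B) \<in> edges (rho Q) \<longleftrightarrow> (f A, f B) \<in> edges (rho Q')"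
    if AB: "A \<in> verts (rho Q)" "B \<in> verts (rho Q)" for A B
  proof -
    obtain u v where u: "u \<in> verts Q" "A = sib_class Q u" and v: "v \<in> verts Q" "B = sib_class Q v"
      using AB by (auto simp: verts_rho)
    have pu: "p u \<in> verts Q'" and pv: "p v \<in> verts Q'"
      using onto u v by auto
    have "(A, B) \<in> edges (rho Q) \<longleftrightarrow> (u, v) \<in> edges Q \<and> sib_class Q u \<noteq> sib_class Q v"
      using edge_rho_iff[OF Q u(1) v(1)] u v by simp
    also have "\<dots> \<longleftrightarrow> (p u, p v) \<in> edges Q' \<and> sib_class Q' (p u) \<noteq> sib_class Q' (p v)"
      using sib[OF u(1) v(1)] edge[OF u(1) v(1)] by blast
    also have "\<dots> \<longleftrightarrow> (f A, f B) \<in> edges (rho Q')"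
      using edge_rho_iff[OF Q' pu pv] f_sib_class u v by simp
    finally show ?thesis .
  qed
  ultimately show ?thesis
    unfolding graph_iso_def bij_betw_def by blast
qed

lemma closed_nbhd_image:
  assumes onto: "p ` verts Q = verts Q'" and u: "u \<in> verts Q"
    and edge: "\<And>u v. u \<in> verts Q \<Longrightarrow> v \<in> verts Q \<Longrightarrow> p u \<noteq> p v \<Longrightarrow>
        (p u, p v) \<in> edges Q' \<longleftrightarrow> (u, v) \<in> edges Q"
  shows "closed_nbhd Q' (p u) = p ` closed_nbhd Q u"
proof (intro set_eqI iffI)
  fix z assume z: "z \<in> closed_nbhd Q' (p u)"
  show "z \<in> p ` closed_nbhd Q u"
  proof (cases "z = p u")
    case False
    then have "z \<in> verts Q'" "(p u, z) \<in> edges Q'"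
      using z by (simp_all add: closed_nbhd_iff)
    then obtain x where x: "x \<in> verts Q" "z = p x"
      using onto by blast
    then have "(u, x) \<in> edges Q"
      using edge[OF u x(1)] \<open>(p u, z) \<in> edges Q'\<close> False by simp
    then show ?thesis
      using x by (auto simp: closed_nbhd_iff)
  qed (simp add: closed_nbhd_def)
next
  fix z assume "z \<in> p ` closed_nbhd Q u"
  then obtain x where x: "x \<in> closed_nbhd Q u" "z = p x"
    by blast
  show "z \<in> closed_nbhd Q' (p u)"
  proof (cases "p x = p u")
    case False
    then have "x \<in> verts Q" "(u, x) \<in> edges Q"
      using x by (auto simp: closed_nbhd_iff)
    then have "(p u, p x) \<in> edges Q'" "p x \<in> verts Q'"
      using edge[OF u] onto False by auto
    then show ?thesis
      using x by (simp add: closed_nbhd_iff)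
  qed (simp add: x closed_nbhd_def)
qed

text \<open>Since \<open>p\<close> only identifies siblings, a closed neighbourhood is a union of sibling
  classes and can therefore be recovered from its image under \<open>p\<close>.\<close>
lemma closed_nbhd_eq_of_image_eq:
  assumes Q: "undirected Q" and u: "u \<in> verts Q" and v: "v \<in> verts Q"
    and twins: "\<And>x y. x \<in> verts Q \<Longrightarrow> y \<in> verts Q \<Longrightarrow> p x = p y \<Longrightarrow>
        closed_nbhd Q x = closed_nbhd Q y"
    and image_eq: "p ` closed_nbhd Q u = p ` closed_nbhd Q v"
  shows "closed_nbhd Q u = closed_nbhd Q v"
proof -
  have "closed_nbhd Q a \<subseteq> closed_nbhd Q b"
    if a: "a \<in> verts Q" and b: "b \<in> verts Q" and ab: "p ` closed_nbhd Q a = p ` closed_nbhd Q b"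
    for a b
  proof
    fix x assume x: "x \<in> closed_nbhd Q a"
    then obtain y where y: "y \<in> closed_nbhd Q b" "p x = p y"
      using ab by (metis imageE imageI)
    have xV: "x \<in> verts Q" and yV: "y \<in> verts Q"
      using x y(1) closed_nbhd_subset_verts[OF a] closed_nbhd_subset_verts[OF b] by auto
    have "b \<in> closed_nbhd Q y"
      using closed_nbhd_commute[OF Q b y(1)] .
    then have "b \<in> closed_nbhd Q x"
      using twins[OF xV yV y(2)] by simp
    then show "x \<in> closed_nbhd Q b"
      using closed_nbhd_commute[OF Q xV] by blast
  qed
  then show ?thesis
    using u v image_eq by blast
qed

lemma graph_iso_rho_of_twin_quotient:
  assumes Q: "undirected Q" and Q': "undirected Q'"
    and onto: "p ` verts Q = verts Q'"
    and edge: "\<And>u v. u \<in> verts Q \<Longrightarrow> v \<in> verts Q \<Longrightarrow> p u \<noteq> p v \<Longrightarrow>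
        (p u, p v) \<in> edges Q' \<longleftrightarrow> (u, v) \<in> edges Q"
    and twins: "\<And>u v. u \<in> verts Q \<Longrightarrow> v \<in> verts Q \<Longrightarrow> p u = p v \<Longrightarrow>
        closed_nbhd Q u = closed_nbhd Q v"
  shows "graph_iso (rho Q) (rho Q')"
proof (rule graph_iso_rhoI[OF Q Q' onto])
  fix u v assume u: "u \<in> verts Q" and v: "v \<in> verts Q"
  have pu: "p u \<in> verts Q'" and pv: "p v \<in> verts Q'"
    using onto u v by auto
  have "sib_class Q' (p u) = sib_class Q' (p v) \<longleftrightarrow> p ` closed_nbhd Q u = p ` closed_nbhd Q v"
    using sib_class_eq_iff[OF pu pv] closed_nbhd_image[OF onto _ edge] u v by simp
  also have "\<dots> \<longleftrightarrow> closed_nbhd Q u = closed_nbhd Q v"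
    using closed_nbhd_eq_of_image_eq[OF Q u v twins] by blast
  also have "\<dots> \<longleftrightarrow> sib_class Q u = sib_class Q v"
    using sib_class_eq_iff[OF u v] by simp
  finally show "sib_class Q' (p u) = sib_class Q' (p v) \<longleftrightarrow> sib_class Q u = sib_class Q v" .
  assume "sib_class Q u \<noteq> sib_class Q v"
  then have "p u \<noteq> p v"
    using twins[OF u v] sib_class_eq_iff[OF u v] by blast
  then show "(p u, p v) \<in> edges Q' \<longleftrightarrow> (u, v) \<in> edges Q"
    using edge[OF u v] by blast
qed

subsection \<open>Deleting pendant vertices\<close>

lemma sib_class_subset_of_nbhd_eq:
  "nbhd H l = {w} \<Longrightarrow> sib_class H l \<subseteq> {l, w}"
  by (auto simp: sib_class_def closed_nbhd_def)

lemma nbhd_rho_pendant: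
  assumes "undirected H" "l \<in> verts H" "nbhd H l = {w}"
  shows "nbhd (rho H) (sib_class H l) =
           (if sib_class H w = sib_class H l then {} else {sib_class H w})"
  using nbhd_rho[OF assms(1,2)] assms(3) by auto

lemma sib_class_pendant_in_leaves_rho_iff:
  assumes "undirected H" "l \<in> verts H" "nbhd H l = {w}"
  shows "sib_class H l \<in> leaves (rho H) \<longleftrightarrow> sib_class H w \<noteq> sib_class H l"
  using nbhd_rho_pendant[OF assms] assms(2) by (simp add: leaves_def degree_def verts_rho)

lemma verts_lambda_set_rho_pendant:
  assumes H: "undirected H" and L: "L \<subseteq> verts H"
    and pendant: "\<And>l. l \<in> L \<Longrightarrow> \<exists>w. w \<notin> L \<and> nbhd H l = {w}"
  shows "verts (lambda_set (sib_class H ` L) (rho H)) = sib_class H ` (verts H - L)"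
proof -
  have "verts (lambda_set (sib_class H ` L) (rho H)) =
          sib_class H ` verts H - (sib_class H ` L \<inter> leaves (rho H))"
    by (simp add: lambda_set_def verts_rho)
  also have "\<dots> = sib_class H ` (verts H - L)"
  proof (intro equalityI subsetI)
    fix C assume C: "C \<in> sib_class H ` verts H - (sib_class H ` L \<inter> leaves (rho H))"
    then obtain x where x: "x \<in> verts H" and C_eq: "C = sib_class H x"
      by blast
    show "C \<in> sib_class H ` (verts H - L)"
    proof (cases "x \<in> L")
      case True
      then obtain w where w: "w \<notin> L" "nbhd H x = {w}"
        using pendant by blast
      have wV: "w \<in> verts H"
        using w(2) by (auto simp: nbhd_def)
      have "sib_class H x \<notin> leaves (rho H)"
        using C True unfolding C_eq by blast
      then have "C = sib_class H w"
        using sib_class_pendant_in_leaves_rho_iff[OF H x w(2)] C_eq by simp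
      then show ?thesis
        using w(1) wV by blast
    next
      case False
      then show ?thesis
        using x C_eq by blast
    qed
  next
    fix C assume "C \<in> sib_class H ` (verts H - L)"
    then obtain v where v: "v \<in> verts H" "v \<notin> L" and C_eq: "C = sib_class H v"
      by blast
    have "sib_class H v \<notin> leaves (rho H)" if l: "l \<in> L" "sib_class H v = sib_class H l" for l
    proof
      assume leaf: "sib_class H v \<in> leaves (rho H)"
      obtain w where w: "w \<notin> L" "nbhd H l = {w}"
        using pendant l(1) by blast
      have lV: "l \<in> verts H"
        using L l(1) by blast
      have "v \<in> sib_class H l"
        using sib_class_self[OF v(1)] l(2) by simp
      then have "v = w"
        using sib_class_subset_of_nbhd_eq[OF w(2)] v(2) l(1) by blast
      then show False
        using leaf sib_class_pendant_in_leaves_rho_iff[OF H lV w(2)] l(2) by simp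
    qed
    then have "C \<notin> sib_class H ` L \<inter> leaves (rho H)"
      unfolding C_eq by (metis IntD1 IntD2 imageE)
    then show "C \<in> sib_class H ` verts H - (sib_class H ` L \<inter> leaves (rho H))"
      using v(1) C_eq by blast
  qed
  finally show ?thesis .
qed

theorem graph_iso_rho_delete_pendant_verts:
  assumes H: "undirected H" and L: "L \<subseteq> verts H"
    and pendant: "\<And>l. l \<in> L \<Longrightarrow> \<exists>w. w \<notin> L \<and> nbhd H l = {w}"
  shows "graph_iso (rho (delete_verts L H)) (rho (lambda_set (sib_class H ` L) (rho H)))"
proof (rule graph_iso_rho_of_twin_quotient)
  let ?M = "lambda_set (sib_class H ` L) (rho H)"
  show "undirected (delete_verts L H)" "undirected ?M"
    using H by (simp_all add: undirected_delete_verts undirected_rho lambda_set_def)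
  show onto: "sib_class H ` verts (delete_verts L H) = verts ?M"
    using verts_lambda_set_rho_pendant[OF H L pendant] by simp
  fix u v assume u: "u \<in> verts (delete_verts L H)" and v: "v \<in> verts (delete_verts L H)"
  then have uH: "u \<in> verts H" and vH: "v \<in> verts H"
    by auto
  show "closed_nbhd (delete_verts L H) u = closed_nbhd (delete_verts L H) v"
    if "sib_class H u = sib_class H v"
    using that u v sib_class_eq_iff[OF uH vH] by (simp add: closed_nbhd_delete_verts)
  assume "sib_class H u \<noteq> sib_class H v"
  moreover have "sib_class H u \<in> verts ?M" "sib_class H v \<in> verts ?M"
    using onto u v by auto
  ultimately show "(sib_class H u, sib_class H v) \<in> edges ?M \<longleftrightarrow> (u, v) \<in> edges (delete_verts L H)"
    using edge_rho_iff[OF H uH vH] u v by (simp add: lambda_set_def)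
qed

lemma nbhd_leaf:
  assumes "l \<in> leaves G"
  obtains w where "nbhd G l = {w}"
  using assms by (auto simp: leaves_def degree_def card_1_singleton_iff)

lemma is_K2_of_adjacent_leaves:
  assumes G: "simple_graph G" "connected_graph G"
    and l: "l \<in> leaves G" and w: "nbhd G l = {w}" and "w \<in> leaves G"
  shows "is_K2 G"
proof -
  have lV: "l \<in> verts G" and wV: "w \<in> verts G" and lw: "(l, w) \<in> edges G"
    using l w by (auto simp: leaves_def nbhd_def)
  have "l \<in> nbhd G w"
    using lw lV G(1) by (auto simp: nbhd_def simple_graph_def dest: symD)
  with \<open>w \<in> leaves G\<close> have nbhd_w: "nbhd G w = {l}"
    by (metis nbhd_leaf singletonD)
  have "y \<in> {l, w}" if "(l, y) \<in> (edges G)\<^sup>*" for y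
    using that
  proof (induction rule: rtrancl_induct)
    case (step y z)
    then have "z \<in> nbhd G y"
      using G(1) by (auto simp: nbhd_def simple_graph_def)
    then show ?case
      using step.IH w nbhd_w by auto
  qed simp
  then have "verts G = {l, w}"
    using G(2) lV wV by (auto simp: connected_graph_def)
  moreover have "l \<noteq> w"
    using lw G(1) by (auto simp: simple_graph_def irrefl_def)
  ultimately show ?thesis
    using lw by (auto simp: is_K2_def)
qed

theorem lemma5p2:
  fixes G :: "'a graph" and L :: "'a set"
  assumes "simple_graph G" and "connected_graph G" and "\<not> is_K2 G"
    and "L \<subseteq> leaves G"
  shows "graph_iso (rho (lambda G))
           (rho (lambda_set (sib_class (lambda_set (leaves G - L) G) ` L)
                   (rho (lambda_set (leaves G - L) G))))"
proof -
  define H where "H = lambda_set (leaves G - L) G"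
  have H_eq: "H = delete_verts (leaves G - L) G"
    by (simp add: H_def lambda_set_def Int_absorb2)
  have lambda_eq: "lambda G = delete_verts L H"
    using assms(4) by (simp add: H_eq lambda_def delete_verts_delete_verts Un_absorb1)
  have "undirected H"
    using assms(1) by (simp add: H_eq simple_graph_imp_undirected undirected_delete_verts)
  moreover have L: "L \<subseteq> verts H"
    using assms(4) by (auto simp: H_eq leaves_def)
  moreover have "\<exists>w. w \<notin> L \<and> nbhd H l = {w}" if l: "l \<in> L" for l
  proof -
    have "l \<in> leaves G"
      using l assms(4) by blast
    then obtain w where w: "nbhd G l = {w}"
      by (rule nbhd_leaf)
    then have "w \<notin> leaves G"
      using is_K2_of_adjacent_leaves[OF assms(1,2)] l assms(3,4) by blast
    moreover have "l \<in> verts G - (leaves G - L)"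
      using l L by (auto simp: H_eq)
    ultimately have "nbhd H l = {w}"
      using w by (auto simp: H_eq nbhd_delete_verts)
    then show ?thesis
      using \<open>w \<notin> leaves G\<close> assms(4) by blast
  qed
  ultimately show ?thesis
    unfolding H_def[symmetric] lambda_eq by (rule graph_iso_rho_delete_pendant_verts)
qed

end
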